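(* Let $\mathbf{u}$ be an $m$-dimensional unit vector with entries in $\mathcal{R}_{12}$. Then for any $0\le j\le m-1$ there exists a sequence $G_1,\ldots,G_q$ of one-level operators of type $\zeta_{12}$ and two-level operators of type $X$ and $H'$ such that $G_1\cdots G_q\mathbf{u}=\mathbf{e}_j$.
   Context: $\zeta_{12}=e^{2\pi i/12}$ and $\mathcal{R}_{12}$ is the smallest subring of $\mathbb{C}$ containing $1/2$ and $\zeta_{12}$. $\mathbf{e}_j$ is the $j$-th standard basis vector. $X=\begin{bmatrix}0&1\\1&0\end{bmatrix}$, $H'=\frac{1+i}{2}\begin{bmatrix}1&1\\1&-1\end{bmatrix}$. The one-level operator $c_{[j]}$ of type $c$ is the $m\times m$ identity with $(j,j)$ entry replaced by $c$; the two-level operator $M_{[j,j']}$ ($j<j'$) of type $M\in\mathrm{M}_2(\mathbb{C})$ is the $m\times m$ identity with entries at $(j,j),(j,j'),(j',j),(j',j')$ replaced by $M_{1,1},M_{1,2},M_{2,1},M_{2,2}$. *)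

theory Defs
  imports Complex_Main "Jordan_Normal_Form.Matrix"
begin

definition zeta12 :: complex where
  "zeta12 = exp (2 * pi * \<i> / 12)"

inductive_set R12 :: "complex set" where
  one: "1 \<in> R12"
| half: "1/2 \<in> R12"
| zeta: "zeta12 \<in> R12"
| add: "a \<in> R12 \<Longrightarrow> b \<in> R12 \<Longrightarrow> a + b \<in> R12"
| neg: "a \<in> R12 \<Longrightarrow> - a \<in> R12"
| mult: "a \<in> R12 \<Longrightarrow> b \<in> R12 \<Longrightarrow> a * b \<in> R12"

definition Xmat :: "complex mat" where
  "Xmat = mat_of_rows_list 2 [[0, 1], [1, 0]]"

definition Hprime :: "complex mat" where
  "Hprime = mat_of_rows_list 2 [[(1 + \<i>) / 2, (1 + \<i>) / 2], [(1 + \<i>) / 2, - (1 + \<i>) / 2]]"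

definition one_level :: "nat \<Rightarrow> nat \<Rightarrow> complex \<Rightarrow> complex mat" where
  "one_level m j c = mat m m (\<lambda>(a, b). if a = b then (if a = j then c else 1) else 0)"

definition two_level :: "nat \<Rightarrow> nat \<Rightarrow> nat \<Rightarrow> complex mat \<Rightarrow> complex mat" where
  "two_level m j j' M = mat m m (\<lambda>(a, b).
     if a = j \<and> b = j then M $$ (0, 0)
     else if a = j \<and> b = j' then M $$ (0, 1)
     else if a = j' \<and> b = j then M $$ (1, 0)
     else if a = j' \<and> b = j' then M $$ (1, 1)
     else if a = b then 1 else 0)"

definition gates :: "nat \<Rightarrow> complex mat set" where
  "gates m = {one_level m j zeta12 | j. j < m}
           \<union> {two_level m j j' Xmat | j j'. j < j' \<and> j' < m}
           \<union> {two_level m j j' Hprime | j j'. j < j' \<and> j' < m}"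

definition mat_prod_list :: "nat \<Rightarrow> complex mat list \<Rightarrow> complex mat" where
  "mat_prod_list m Gs = foldr (\<lambda>A B. A * B) Gs (1\<^sub>m m)"

end

theory Submission
  imports Defs "HOL-Computational_Algebra.Primes"
begin

text \<open>
  For suitable \<open>K\<close> the vector \<open>(1 + \<i>)\<^sup>2\<^sup>K u = \<i>\<^sup>K 2\<^sup>K u\<close> has entries in \<open>\<int>[\<zeta>]\<close> and squared norm \<open>2\<^sup>2\<^sup>K\<close>.
  For \<open>x\<close> in \<open>\<int>[\<zeta>]\<close> write \<open>|x|\<^sup>2 = P + Q \<surd>3\<close> with integers \<open>P, Q\<close>; then \<open>x\<close> is not
  divisible by the prime \<open>1 + \<i>\<close> above 2 iff \<open>P\<close> or \<open>Q\<close> is odd, and accordingly \<open>x\<close> is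
  congruent modulo 2 to \<open>\<zeta>\<^sup>k\<close> or to \<open>(1 + \<zeta>) \<zeta>\<^sup>k\<close>. For an integral vector of squared norm
  \<open>2\<^sup>l\<close> with \<open>l \<ge> 1\<close> the sums of the \<open>P\<close>'s and of the \<open>Q\<close>'s are even, so its entries
  not divisible by \<open>1 + \<i>\<close> pair up within one of these classes; a power of the \<open>\<zeta>\<close>-gate
  aligns a pair modulo 2, after which \<open>H'\<close> makes both entries divisible by \<open>1 + \<i>\<close>.
  Once all entries are divisible we divide by \<open>1 + \<i>\<close> and recurse. At norm 1 a single
  entry is nonzero and it is a power of \<open>\<zeta>\<close>, which \<open>\<zeta>\<close>- and \<open>X\<close>-gates move to \<open>e\<^sub>j\<close>.
\<close>

lemma int_sq_eq_prime_mult_sq_imp_0: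
  fixes p a b :: int
  assumes "prime p" "a\<^sup>2 = p * b\<^sup>2"
  shows "b = 0"
proof (rule ccontr)
  assume "b \<noteq> 0"
  then have "a \<noteq> 0" using assms prime_gt_0_int[OF assms(1)] by auto
  have p: "prime_elem p" using assms(1) by (rule prime_imp_prime_elem)
  have "multiplicity p (a\<^sup>2) = 2 * multiplicity p a"
    using prime_elem_multiplicity_power_distrib[OF p \<open>a \<noteq> 0\<close>] .
  moreover have "multiplicity p (p * b\<^sup>2) = 1 + 2 * multiplicity p b"
    using p \<open>b \<noteq> 0\<close> assms(1)
    by (simp add: prime_elem_multiplicity_mult_distrib prime_elem_multiplicity_power_distrib)
  ultimately have "2 * multiplicity p a = 1 + 2 * multiplicity p b"
    using assms(2) by simp
  then show False by presburger
qed

lemma of_int_plus_of_int_sqrt3_eq_iff: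
  "real_of_int p + real_of_int q * sqrt 3 = real_of_int p' + real_of_int q' * sqrt 3
     \<longleftrightarrow> p = p' \<and> q = q'"
proof
  assume eq: "real_of_int p + real_of_int q * sqrt 3 = real_of_int p' + real_of_int q' * sqrt 3"
  have "real_of_int (p' - p) = real_of_int (q - q') * sqrt 3"
    using eq by (simp add: algebra_simps)
  then have "real_of_int ((p' - p)\<^sup>2) = real_of_int (3 * (q - q')\<^sup>2)"
    by (simp add: power_mult_distrib)
  then have "q - q' = 0"
    by (intro int_sq_eq_prime_mult_sq_imp_0[of 3]) (simp_all only: of_int_eq_iff, simp)
  then show "p = p' \<and> q = q'" using eq by simp
qed simp

lemma zeta12_eq_Complex: "zeta12 = Complex (sqrt 3 / 2) (1 / 2)"
proof -
  have "2 * pi * \<i> / 12 = \<i> * complex_of_real (pi / 6)" by (simp add: field_simps)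
  then have "zeta12 = cis (pi / 6)" unfolding zeta12_def by (simp add: cis_conv_exp)
  then show ?thesis by (simp add: cis.ctr cos_30 sin_30)
qed

lemma norm_zeta12 [simp]: "cmod zeta12 = 1"
  by (simp add: zeta12_eq_Complex cmod_def power_divide)

lemma zeta12_pow_3: "zeta12 ^ 3 = \<i>"
  by (simp add: zeta12_eq_Complex power3_eq_cube complex_eq_iff field_simps)

lemma zeta12_pow_4: "zeta12 ^ 4 = zeta12\<^sup>2 - 1"
proof -
  have "zeta12 ^ 4 = zeta12 * \<i>" by (simp flip: zeta12_pow_3 add: power_numeral_reduce)
  then show ?thesis by (simp add: zeta12_eq_Complex power2_eq_square complex_eq_iff)
qed

lemma zeta12_pow_6: "zeta12 ^ 6 = -1"
  using power_add[of zeta12 3 3] by (simp add: zeta12_pow_3)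

lemma zeta12_pow_12: "zeta12 ^ 12 = 1"
  using power_add[of zeta12 6 6] by (simp add: zeta12_pow_6)

lemma zeta12_pow_inverse: "zeta12 ^ (11 * k) * zeta12 ^ k = 1"
proof -
  have "zeta12 ^ (11 * k) * zeta12 ^ k = (zeta12 ^ 12) ^ k"
    by (simp add: power_mult [symmetric] power_add [symmetric])
  then show ?thesis by (simp add: zeta12_pow_12)
qed

section \<open>The ring \<open>\<int>[\<zeta>\<^sub>1\<^sub>2]\<close>\<close>

definition z12 :: "int \<Rightarrow> int \<Rightarrow> int \<Rightarrow> int \<Rightarrow> complex" where
  "z12 a b c d = of_int a + of_int b * zeta12 + of_int c * zeta12\<^sup>2 + of_int d * zeta12 ^ 3"

definition Z12 :: "complex set" where
  "Z12 = {z12 a b c d | a b c d. True}"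

lemma z12_in_Z12 [simp]: "z12 a b c d \<in> Z12"
  unfolding Z12_def by blast

lemma Z12_cases:
  assumes "x \<in> Z12"
  obtains a b c d where "x = z12 a b c d"
  using assms unfolding Z12_def by blast

lemma zeta12_mult_z12: "zeta12 * z12 a b c d = z12 (- d) a (b + d) c"
proof -
  have "zeta12 * z12 a b c d
      = of_int a * zeta12 + of_int b * zeta12\<^sup>2 + of_int c * zeta12 ^ 3 + of_int d * zeta12 ^ 4"
    unfolding z12_def by (simp add: algebra_simps power_numeral_reduce)
  then show ?thesis unfolding z12_def zeta12_pow_4 by (simp add: algebra_simps)
qed

lemma z12_add: "z12 a b c d + z12 a' b' c' d' = z12 (a + a') (b + b') (c + c') (d + d')"
  unfolding z12_def by (simp add: algebra_simps)

lemma z12_uminus: "- z12 a b c d = z12 (- a) (- b) (- c) (- d)"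
  unfolding z12_def by (simp add: algebra_simps)

lemma of_int_mult_z12: "of_int k * z12 a b c d = z12 (k * a) (k * b) (k * c) (k * d)"
  unfolding z12_def by (simp add: algebra_simps)

lemma Z12_add: "x \<in> Z12 \<Longrightarrow> y \<in> Z12 \<Longrightarrow> x + y \<in> Z12"
  by (elim Z12_cases) (simp add: z12_add)

lemma Z12_uminus: "x \<in> Z12 \<Longrightarrow> - x \<in> Z12"
  by (elim Z12_cases) (simp add: z12_uminus)

lemma Z12_diff: "x \<in> Z12 \<Longrightarrow> y \<in> Z12 \<Longrightarrow> x - y \<in> Z12"
  using Z12_add Z12_uminus by (metis diff_conv_add_uminus)

lemma Z12_of_int_mult: "x \<in> Z12 \<Longrightarrow> of_int k * x \<in> Z12"
  by (elim Z12_cases) (simp add: of_int_mult_z12)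

lemma Z12_zeta12_mult: "x \<in> Z12 \<Longrightarrow> zeta12 * x \<in> Z12"
  by (elim Z12_cases) (simp add: zeta12_mult_z12)

lemma Z12_mult:
  assumes "x \<in> Z12" "y \<in> Z12"
  shows "x * y \<in> Z12"
proof -
  obtain a b c d where x: "x = z12 a b c d" using assms(1) by (rule Z12_cases)
  have "x * y = of_int a * y + of_int b * (zeta12 * y) + of_int c * (zeta12 * (zeta12 * y))
      + of_int d * (zeta12 * (zeta12 * (zeta12 * y)))"
    unfolding x z12_def by (simp add: algebra_simps power2_eq_square power3_eq_cube)
  then show ?thesis
    using assms(2) by (simp add: Z12_add Z12_of_int_mult Z12_zeta12_mult)
qed

lemma zeta12_pow_z12:
  "zeta12 ^ 0 = z12 1 0 0 0" "zeta12 ^ 1 = z12 0 1 0 0" "zeta12 ^ 2 = z12 0 0 1 0"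
  "zeta12 ^ 3 = z12 0 0 0 1" "zeta12 ^ 4 = z12 (- 1) 0 1 0" "zeta12 ^ 5 = z12 0 (- 1) 0 1"
proof -
  show first: "zeta12 ^ 0 = z12 1 0 0 0" "zeta12 ^ 1 = z12 0 1 0 0" "zeta12 ^ 2 = z12 0 0 1 0"
    "zeta12 ^ 3 = z12 0 0 0 1" "zeta12 ^ 4 = z12 (- 1) 0 1 0"
    unfolding z12_def zeta12_pow_4 by simp_all
  have "zeta12 ^ 5 = zeta12 * zeta12 ^ 4" by (simp add: power_numeral_reduce)
  then show "zeta12 ^ 5 = z12 0 (- 1) 0 1" unfolding first(5) zeta12_mult_z12 by simp
qed

lemma Z12_0 [simp]: "0 \<in> Z12"
  using z12_in_Z12[of 0 0 0 0] by (simp add: z12_def)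

lemma Z12_1 [simp]: "1 \<in> Z12"
  and Z12_zeta12 [simp]: "zeta12 \<in> Z12"
  and Z12_imag_unit [simp]: "\<i> \<in> Z12"
  using zeta12_pow_z12(1,2,4) z12_in_Z12 by (metis power_0 power_one_right zeta12_pow_3)+

lemma Z12_2 [simp]: "2 \<in> Z12"
  using Z12_add[OF Z12_1 Z12_1] by simp

lemma Z12_power: "x \<in> Z12 \<Longrightarrow> x ^ n \<in> Z12"
  by (induction n) (auto intro: Z12_mult)

lemma Z12_1_plus_i [simp]: "1 + \<i> \<in> Z12"
  by (simp add: Z12_add)

lemma Z12_zeta12_pow [simp]: "zeta12 ^ k \<in> Z12"
  by (simp add: Z12_power)

lemma cmod_z12_sq:
  "(cmod (z12 a b c d))\<^sup>2
     = of_int (a\<^sup>2 + b\<^sup>2 + c\<^sup>2 + d\<^sup>2 + a * c + b * d) + of_int (a * b + b * c + c * d) * sqrt 3"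
proof -
  have "Re (z12 a b c d) = a + b * sqrt 3 / 2 + c / 2"
    "Im (z12 a b c d) = b / 2 + c * sqrt 3 / 2 + d"
    unfolding z12_def zeta12_pow_3 by (simp_all add: zeta12_eq_Complex power2_eq_square)
  then have "(cmod (z12 a b c d))\<^sup>2
      = (a + b * sqrt 3 / 2 + c / 2)\<^sup>2 + (b / 2 + c * sqrt 3 / 2 + d)\<^sup>2"
    by (simp add: cmod_power2)
  also have "\<dots> = (a\<^sup>2 + b\<^sup>2 + c\<^sup>2 + d\<^sup>2 + a * c + b * d) + (a * b + b * c + c * d) * sqrt 3
      + (sqrt 3 * sqrt 3 - 3) * (b\<^sup>2 + c\<^sup>2) / 4"
    by (simp add: power2_eq_square field_simps)
  finally show ?thesis by simp
qed

lemma R12_pow2_mult_Z12: "x \<in> R12 \<Longrightarrow> \<exists>k. 2 ^ k * x \<in> Z12"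
proof (induction rule: R12.induct)
  case one
  show ?case by (rule exI[of _ 0]) simp
next
  case half
  show ?case by (rule exI[of _ 1]) simp
next
  case zeta
  show ?case by (rule exI[of _ 0]) simp
next
  case (add a b)
  then obtain k l where "2 ^ k * a \<in> Z12" "2 ^ l * b \<in> Z12" by blast
  then have "2 ^ l * (2 ^ k * a) + 2 ^ k * (2 ^ l * b) \<in> Z12"
    by (simp add: Z12_add Z12_mult Z12_power)
  then have "2 ^ (k + l) * (a + b) \<in> Z12" by (simp add: algebra_simps power_add)
  then show ?case by blast
next
  case (neg a)
  then show ?case using Z12_uminus by fastforce
next
  case (mult a b)
  then obtain k l where "2 ^ k * a \<in> Z12" "2 ^ l * b \<in> Z12" by blast
  then have "(2 ^ k * a) * (2 ^ l * b) \<in> Z12" by (rule Z12_mult)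
  then have "2 ^ (k + l) * (a * b) \<in> Z12" by (simp add: algebra_simps power_add)
  then show ?case by blast
qed

lemma R12_common_pow2_mult_Z12:
  fixes f :: "nat \<Rightarrow> complex"
  shows "\<forall>i<m. f i \<in> R12 \<Longrightarrow> \<exists>K. \<forall>i<m. 2 ^ K * f i \<in> Z12"
proof (induction m)
  case 0
  show ?case by simp
next
  case (Suc m)
  then obtain K where K: "\<forall>i<m. 2 ^ K * f i \<in> Z12" by auto
  obtain k where k: "2 ^ k * f m \<in> Z12" using Suc.prems R12_pow2_mult_Z12 by blast
  have "2 ^ (K + k) * f i \<in> Z12" if "i < Suc m" for i
  proof (cases "i = m")
    case True
    have "2 ^ (K + k) * f i = 2 ^ K * (2 ^ k * f m)" using True by (simp add: power_add)
    then show ?thesis using k by (simp add: Z12_mult Z12_power)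
  next
    case False
    have "2 ^ k * (2 ^ K * f i) \<in> Z12" using K False that by (simp add: Z12_mult Z12_power)
    then show ?thesis by (simp add: power_add ac_simps)
  qed
  then show ?case by blast
qed

section \<open>Residues modulo 2\<close>

text \<open>On \<^const>\<open>Z12\<close> the integers \<open>p, q\<close> with \<open>|x|\<^sup>2 = p + q \<surd>3\<close> exist and are unique
  (\<open>\<surd>3\<close> is irrational); elsewhere these values are unspecified.\<close>

definition norm_int_part :: "complex \<Rightarrow> int" where
  "norm_int_part x = (THE p. \<exists>q. (cmod x)\<^sup>2 = of_int p + of_int q * sqrt 3)"

definition norm_sqrt3_part :: "complex \<Rightarrow> int" where
  "norm_sqrt3_part x = (THE q. \<exists>p. (cmod x)\<^sup>2 = of_int p + of_int q * sqrt 3)"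

lemma norm_parts_eqI:
  assumes "(cmod x)\<^sup>2 = of_int p + of_int q * sqrt 3"
  shows "norm_int_part x = p" "norm_sqrt3_part x = q"
  unfolding norm_int_part_def norm_sqrt3_part_def assms
  by (rule the_equality; auto simp: of_int_plus_of_int_sqrt3_eq_iff)+

lemma norm_parts_z12:
  "norm_int_part (z12 a b c d) = a\<^sup>2 + b\<^sup>2 + c\<^sup>2 + d\<^sup>2 + a * c + b * d"
  "norm_sqrt3_part (z12 a b c d) = a * b + b * c + c * d"
  using norm_parts_eqI[OF cmod_z12_sq] by blast+

lemma cmod_sq_Z12:
  "x \<in> Z12 \<Longrightarrow> (cmod x)\<^sup>2 = of_int (norm_int_part x) + of_int (norm_sqrt3_part x) * sqrt 3"
  by (elim Z12_cases) (simp add: norm_parts_z12 cmod_z12_sq)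

definition z12_dvd :: "complex \<Rightarrow> complex \<Rightarrow> bool" where
  "z12_dvd d x \<longleftrightarrow> (\<exists>w\<in>Z12. x = d * w)"

lemma z12_dvd_add:
  assumes "z12_dvd d x" "z12_dvd d y"
  shows "z12_dvd d (x + y)"
proof -
  obtain v w where "v \<in> Z12" "w \<in> Z12" "x = d * v" "y = d * w"
    using assms unfolding z12_dvd_def by blast
  then show ?thesis
    unfolding z12_dvd_def by (intro bexI[of _ "v + w"]) (simp_all add: distrib_left Z12_add)
qed

lemma z12_dvd_imp_Z12: "d \<in> Z12 \<Longrightarrow> z12_dvd d x \<Longrightarrow> x \<in> Z12"
  unfolding z12_dvd_def using Z12_mult by blast

lemma z12_dvd_2_imp_dvd_1_plus_i:
  assumes "z12_dvd 2 x"
  shows "z12_dvd (1 + \<i>) x"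
proof -
  obtain w where w: "w \<in> Z12" "x = 2 * w" using assms unfolding z12_dvd_def by blast
  have "x = (1 + \<i>) * ((1 - \<i>) * w)" unfolding w(2) by (simp add: algebra_simps)
  moreover have "(1 - \<i>) * w \<in> Z12" using w(1) by (simp add: Z12_diff Z12_mult)
  ultimately show ?thesis unfolding z12_dvd_def by blast
qed

lemma z12_dvd_2_diff_z12:
  assumes "even (a - a')" "even (b - b')" "even (c - c')" "even (d - d')"
  shows "z12_dvd 2 (z12 a b c d - z12 a' b' c' d')"
proof -
  have "\<exists>k. x = x' + 2 * k" if "even (x - x')" for x x' :: int
    using that by (metis evenE diff_add_cancel add.commute)
  then obtain a2 b2 c2 d2
    where "a = a' + 2 * a2" "b = b' + 2 * b2" "c = c' + 2 * c2" "d = d' + 2 * d2"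
    using assms by metis
  then have "z12 a b c d = z12 a' b' c' d' + of_int 2 * z12 a2 b2 c2 d2"
    unfolding of_int_mult_z12 z12_add by simp
  then show ?thesis unfolding z12_dvd_def by force
qed

definition zeta_class_mod2 :: "complex \<Rightarrow> complex \<Rightarrow> bool" where
  "zeta_class_mod2 r x \<longleftrightarrow> (\<exists>k. z12_dvd 2 (x - r * zeta12 ^ k))"

lemma zeta_class_mod2I:
  "r * zeta12 ^ k = z12 a' b' c' d' \<Longrightarrow> even (a - a') \<Longrightarrow> even (b - b') \<Longrightarrow> even (c - c')
    \<Longrightarrow> even (d - d') \<Longrightarrow> zeta_class_mod2 r (z12 a b c d)"
  unfolding zeta_class_mod2_def by (intro exI[of _ k]) (simp add: z12_dvd_2_diff_z12)

lemma Z12_odd_norm_int_part_class: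
  assumes "x \<in> Z12" "odd (norm_int_part x)"
  shows "zeta_class_mod2 1 x"
proof -
  obtain a b c d where x: "x = z12 a b c d" using assms(1) by (rule Z12_cases)
  have "odd (a\<^sup>2 + b\<^sup>2 + c\<^sup>2 + d\<^sup>2 + a * c + b * d)" using assms(2) by (simp add: x norm_parts_z12)
  \<comment> \<open>the six parity patterns of \<open>(a, b, c, d)\<close> are those of \<open>\<zeta>\<^sup>0, \<dots>, \<zeta>\<^sup>5\<close>\<close>
  then consider "odd a" "even b" "even c" "even d" | "even a" "odd b" "even c" "even d"
    | "even a" "even b" "odd c" "even d" | "even a" "even b" "even c" "odd d"
    | "odd a" "even b" "odd c" "even d" | "even a" "odd b" "even c" "odd d"
    by (cases "even a"; cases "even b"; cases "even c"; cases "even d") auto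
  then show ?thesis
    unfolding x
    by cases (auto intro: zeta12_pow_z12[THEN zeta_class_mod2I[where r = 1, simplified]])
qed

lemma one_plus_zeta12_mult_pow_z12:
  "(1 + zeta12) * zeta12 ^ 0 = z12 1 1 0 0" "(1 + zeta12) * zeta12 ^ 1 = z12 0 1 1 0"
  "(1 + zeta12) * zeta12 ^ 2 = z12 0 0 1 1" "(1 + zeta12) * zeta12 ^ 3 = z12 (- 1) 0 1 1"
  "(1 + zeta12) * zeta12 ^ 4 = z12 (- 1) (- 1) 1 1"
  "(1 + zeta12) * zeta12 ^ 5 = z12 (- 1) (- 1) 0 1"
  unfolding distrib_right mult_1_left zeta12_pow_z12 zeta12_mult_z12 z12_add by simp_all

lemma Z12_odd_norm_sqrt3_part_class:
  assumes "x \<in> Z12" "odd (norm_sqrt3_part x)"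
  shows "zeta_class_mod2 (1 + zeta12) x"
proof -
  obtain a b c d where x: "x = z12 a b c d" using assms(1) by (rule Z12_cases)
  have "odd (a * b + b * c + c * d)" using assms(2) by (simp add: x norm_parts_z12)
  then consider "odd a" "odd b" "even c" "even d" | "even a" "odd b" "odd c" "even d"
    | "even a" "even b" "odd c" "odd d" | "odd a" "even b" "odd c" "odd d"
    | "odd a" "odd b" "odd c" "odd d" | "odd a" "odd b" "even c" "odd d"
    by (cases "even a"; cases "even b"; cases "even c"; cases "even d") auto
  then show ?thesis
    unfolding x by cases (auto intro: one_plus_zeta12_mult_pow_z12[THEN zeta_class_mod2I])
qed

lemma z12_dvd_1_plus_iI:
  assumes "(1 + \<i>) * t = z12 a' b' c' d'" "t \<in> Z12"
    and "even (a - a')" "even (b - b')" "even (c - c')" "even (d - d')"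
  shows "z12_dvd (1 + \<i>) (z12 a b c d)"
proof -
  have "z12_dvd (1 + \<i>) (z12 a b c d - z12 a' b' c' d')"
    using assms(3-) by (intro z12_dvd_2_imp_dvd_1_plus_i z12_dvd_2_diff_z12)
  moreover have "z12_dvd (1 + \<i>) (z12 a' b' c' d')"
    using assms(1,2) unfolding z12_dvd_def by metis
  ultimately show ?thesis using z12_dvd_add by fastforce
qed

lemma Z12_even_norm_parts_dvd:
  assumes "x \<in> Z12" "even (norm_int_part x)" "even (norm_sqrt3_part x)"
  shows "z12_dvd (1 + \<i>) x"
proof -
  obtain a b c d where x: "x = z12 a b c d" using assms(1) by (rule Z12_cases)
  have one_plus_i: "1 + \<i> = z12 1 0 0 1" unfolding z12_def zeta12_pow_3 by simp
  have multiples: "(1 + \<i>) * 0 = z12 0 0 0 0" "(1 + \<i>) * 1 = z12 1 0 0 1"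
    "(1 + \<i>) * zeta12 = z12 (- 1) 1 1 0" "(1 + \<i>) * (1 + zeta12) = z12 0 1 1 1"
    unfolding one_plus_i distrib_left mult.commute[of _ zeta12] zeta12_mult_z12 z12_add
    by (simp_all add: z12_def)
  have "even (a\<^sup>2 + b\<^sup>2 + c\<^sup>2 + d\<^sup>2 + a * c + b * d)" "even (a * b + b * c + c * d)"
    using assms(2,3) by (simp_all add: x norm_parts_z12)
  then consider "even a" "even b" "even c" "even d" | "odd a" "even b" "even c" "odd d"
    | "odd a" "odd b" "odd c" "even d" | "even a" "odd b" "odd c" "odd d"
    by (cases "even a"; cases "even b"; cases "even c"; cases "even d") auto
  then show ?thesis
    unfolding x by cases (auto intro: multiples[THEN z12_dvd_1_plus_iI] simp: Z12_add)
qed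

lemma zeta_class_mod2_rotate:
  assumes "zeta_class_mod2 r x" "zeta_class_mod2 r y"
  shows "\<exists>e. z12_dvd 2 (x - zeta12 ^ e * y)"
proof -
  obtain k1 w1 where w1: "w1 \<in> Z12" "x = r * zeta12 ^ k1 + 2 * w1"
    using assms(1) unfolding zeta_class_mod2_def z12_dvd_def by (metis diff_eq_eq add.commute)
  obtain k2 w2 where w2: "w2 \<in> Z12" "y = r * zeta12 ^ k2 + 2 * w2"
    using assms(2) unfolding zeta_class_mod2_def z12_dvd_def by (metis diff_eq_eq add.commute)
  define e where "e = k1 + 11 * k2"
  have "zeta12 ^ e * zeta12 ^ k2 = zeta12 ^ k1"
    unfolding e_def using zeta12_pow_inverse[of k2] by (simp add: power_add mult.assoc)
  then have "x - zeta12 ^ e * y = 2 * (w1 - zeta12 ^ e * w2)"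
    unfolding w1(2) w2(2) by (simp add: algebra_simps)
  moreover have "w1 - zeta12 ^ e * w2 \<in> Z12"
    using w1(1) w2(1) by (simp add: Z12_diff Z12_mult)
  ultimately show ?thesis unfolding z12_dvd_def by blast
qed

lemma sum_norm_parts_Z12:
  assumes "\<forall>k\<in>A. x k \<in> Z12" "(\<Sum>k\<in>A. (cmod (x k))\<^sup>2) = of_int n"
  shows "(\<Sum>k\<in>A. norm_int_part (x k)) = n" "(\<Sum>k\<in>A. norm_sqrt3_part (x k)) = 0"
proof -
  have "(\<Sum>k\<in>A. (cmod (x k))\<^sup>2)
      = of_int (\<Sum>k\<in>A. norm_int_part (x k)) + of_int (\<Sum>k\<in>A. norm_sqrt3_part (x k)) * sqrt 3"
    using assms(1) by (simp add: cmod_sq_Z12 sum.distrib sum_distrib_right)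
  then have "of_int (\<Sum>k\<in>A. norm_int_part (x k)) + of_int (\<Sum>k\<in>A. norm_sqrt3_part (x k)) * sqrt 3
      = of_int n + of_int 0 * sqrt 3"
    using assms(2) by simp
  then show "(\<Sum>k\<in>A. norm_int_part (x k)) = n" "(\<Sum>k\<in>A. norm_sqrt3_part (x k)) = 0"
    unfolding of_int_plus_of_int_sqrt3_eq_iff by simp_all
qed

lemma exists_other_odd:
  fixes f :: "'a \<Rightarrow> 'b::semiring_parity"
  assumes "finite A" "even (sum f A)" "i \<in> A" "odd (f i)"
  shows "\<exists>j\<in>A. j \<noteq> i \<and> odd (f j)"
proof (rule ccontr)
  assume "\<not> ?thesis"
  then have "{j \<in> A. odd (f j)} = {i}" using assms(3,4) by blast
  then show False using assms(1,2) by (simp add: even_sum_iff)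
qed

lemma exists_zeta_class_partner:
  fixes x :: "nat \<Rightarrow> complex"
  assumes "\<forall>k<m. x k \<in> Z12" "(\<Sum>k<m. (cmod (x k))\<^sup>2) = of_int n" "even n"
    and "i < m" "\<not> z12_dvd (1 + \<i>) (x i)"
  shows "\<exists>j<m. j \<noteq> i \<and> (\<exists>r. zeta_class_mod2 r (x i) \<and> zeta_class_mod2 r (x j))"
proof -
  have Z12: "\<forall>k\<in>{..<m}. x k \<in> Z12" using assms(1) by blast
  have i: "i \<in> {..<m}" "x i \<in> Z12" using assms(1,4) by auto
  have even_int: "even (\<Sum>k<m. norm_int_part (x k))"
    and even_sqrt3: "even (\<Sum>k<m. norm_sqrt3_part (x k))"
    using sum_norm_parts_Z12[OF Z12 assms(2)] assms(3) by simp_all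
  consider "odd (norm_int_part (x i))" | "odd (norm_sqrt3_part (x i))"
    using Z12_even_norm_parts_dvd i(2) assms(5) by blast
  then show ?thesis
  proof cases
    case 1
    then obtain j where "j < m" "j \<noteq> i" "odd (norm_int_part (x j))"
      using exists_other_odd[OF finite_lessThan even_int i(1) 1] by auto
    then show ?thesis using 1 i(2) assms(1) Z12_odd_norm_int_part_class by blast
  next
    case 2
    then obtain j where "j < m" "j \<noteq> i" "odd (norm_sqrt3_part (x j))"
      using exists_other_odd[OF finite_lessThan even_sqrt3 i(1) 2] by auto
    then show ?thesis using 2 i(2) assms(1) Z12_odd_norm_sqrt3_part_class by blast
  qed
qed

section \<open>Integral vectors of norm 1\<close>

lemma eisenstein_norm_twice: "2 * ((a::int)\<^sup>2 + a * c + c\<^sup>2) = a\<^sup>2 + c\<^sup>2 + (a + c)\<^sup>2"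
  by (simp add: power2_eq_square algebra_simps)

lemma eisenstein_norm_nonneg: "0 \<le> (a::int)\<^sup>2 + a * c + c\<^sup>2"
proof -
  have "0 \<le> 2 * (a\<^sup>2 + a * c + c\<^sup>2)" unfolding eisenstein_norm_twice by simp
  then show ?thesis by simp
qed

lemma eisenstein_norm_eq_0:
  assumes "(a::int)\<^sup>2 + a * c + c\<^sup>2 = 0"
  shows "a = 0 \<and> c = 0"
proof -
  have "a\<^sup>2 + c\<^sup>2 + (a + c)\<^sup>2 = 0" using assms eisenstein_norm_twice[of a c] by simp
  then have "a\<^sup>2 = 0" "c\<^sup>2 = 0"
    using zero_le_power2[of a] zero_le_power2[of c] zero_le_power2[of "a + c"] by linarith+
  then show ?thesis by simp
qed

lemma eisenstein_norm_eq_1: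
  assumes "(a::int)\<^sup>2 + a * c + c\<^sup>2 = 1"
  shows "\<exists>e. of_int a + of_int c * zeta12\<^sup>2 = zeta12 ^ e"
proof -
  have small: "x \<in> {-1, 0, 1}" if "x\<^sup>2 \<le> 2" for x :: int
  proof -
    have "\<bar>x\<bar> < 2"
      using that abs_le_square_iff[of 2 x] by (simp add: power2_eq_square)
    then show ?thesis by auto
  qed
  have "a\<^sup>2 + c\<^sup>2 + (a + c)\<^sup>2 = 2" using assms eisenstein_norm_twice[of a c] by simp
  then have "a\<^sup>2 \<le> 2" "c\<^sup>2 \<le> 2"
    using zero_le_power2[of a] zero_le_power2[of c] zero_le_power2[of "a + c"] by linarith+
  then have "a \<in> {-1, 0, 1}" "c \<in> {-1, 0, 1}" using small by blast+
  then consider "a = 1" "c = 0" | "a = -1" "c = 0" | "a = 0" "c = 1" | "a = 0" "c = -1"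
    | "a = 1" "c = -1" | "a = -1" "c = 1"
    using assms by auto
  then show ?thesis
  proof cases
    case 1 then show ?thesis by (intro exI[of _ 0]) simp
  next
    case 2 then show ?thesis using zeta12_pow_6 by (intro exI[of _ 6]) simp
  next
    case 3 then show ?thesis by (intro exI[of _ 2]) simp
  next
    case 4 then show ?thesis using power_add[of zeta12 6 2] zeta12_pow_6 by (intro exI[of _ 8]) simp
  next
    case 5 then show ?thesis using power_add[of zeta12 6 4] zeta12_pow_6 zeta12_pow_4
      by (intro exI[of _ 10]) simp
  next
    case 6 then show ?thesis using zeta12_pow_4 by (intro exI[of _ 4]) simp
  qed
qed

text \<open>\<open>\<int>[\<zeta>] = \<int>[\<omega>] \<oplus> \<zeta> \<int>[\<omega>]\<close> for the sixth root of unity \<open>\<omega> = \<zeta>\<^sup>2\<close>, and \<open>P\<close> is the sum of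
  the two Eisenstein norms.\<close>

lemma z12_eisenstein_split:
  "z12 a b c d = (of_int a + of_int c * zeta12\<^sup>2) + zeta12 * (of_int b + of_int d * zeta12\<^sup>2)"
  "norm_int_part (z12 a b c d) = (a\<^sup>2 + a * c + c\<^sup>2) + (b\<^sup>2 + b * d + d\<^sup>2)"
  by (simp add: z12_def algebra_simps power2_eq_square power3_eq_cube) (simp add: norm_parts_z12)

lemma Z12_norm_int_part_nonneg: "x \<in> Z12 \<Longrightarrow> 0 \<le> norm_int_part x"
  by (elim Z12_cases) (simp add: z12_eisenstein_split(2) eisenstein_norm_nonneg add_nonneg_nonneg)

lemma Z12_norm_int_part_eq_0: "x \<in> Z12 \<Longrightarrow> norm_int_part x = 0 \<Longrightarrow> x = 0"
proof (elim Z12_cases)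
  fix a b c d
  assume "norm_int_part x = 0" and x: "x = z12 a b c d"
  then have "(a\<^sup>2 + a * c + c\<^sup>2) + (b\<^sup>2 + b * d + d\<^sup>2) = 0"
    by (simp only: z12_eisenstein_split(2))
  then have "a\<^sup>2 + a * c + c\<^sup>2 = 0" "b\<^sup>2 + b * d + d\<^sup>2 = 0"
    using eisenstein_norm_nonneg[of a c] eisenstein_norm_nonneg[of b d] by linarith+
  then have "a = 0" "b = 0" "c = 0" "d = 0" using eisenstein_norm_eq_0 by blast+
  then show "x = 0" unfolding x z12_def by simp
qed

lemma Z12_norm_int_part_eq_1: "x \<in> Z12 \<Longrightarrow> norm_int_part x = 1 \<Longrightarrow> \<exists>e. x = zeta12 ^ e"
proof (elim Z12_cases)
  fix a b c d
  assume "norm_int_part x = 1" and x: "x = z12 a b c d"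
  then have sum: "(a\<^sup>2 + a * c + c\<^sup>2) + (b\<^sup>2 + b * d + d\<^sup>2) = 1"
    by (simp only: z12_eisenstein_split(2))
  have "0 \<le> a\<^sup>2 + a * c + c\<^sup>2" "0 \<le> b\<^sup>2 + b * d + d\<^sup>2" by (fact eisenstein_norm_nonneg)+
  with sum consider "a\<^sup>2 + a * c + c\<^sup>2 = 1" "b\<^sup>2 + b * d + d\<^sup>2 = 0"
    | "a\<^sup>2 + a * c + c\<^sup>2 = 0" "b\<^sup>2 + b * d + d\<^sup>2 = 1"
    by linarith
  then show "\<exists>e. x = zeta12 ^ e"
  proof cases
    case 1
    then obtain e where e: "of_int a + of_int c * zeta12\<^sup>2 = zeta12 ^ e"
      using eisenstein_norm_eq_1 by blast
    have "b = 0" "d = 0" using 1(2) eisenstein_norm_eq_0 by blast+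
    then have "x = zeta12 ^ e" unfolding x z12_eisenstein_split(1) e by simp
    then show ?thesis by blast
  next
    case 2
    then obtain e where e: "of_int b + of_int d * zeta12\<^sup>2 = zeta12 ^ e"
      using eisenstein_norm_eq_1 by blast
    have "a = 0" "c = 0" using 2(1) eisenstein_norm_eq_0 by blast+
    then have "x = zeta12 ^ Suc e" unfolding x z12_eisenstein_split(1) e by simp
    then show ?thesis by blast
  qed
qed

lemma Z12_unit_sqnorm_support:
  fixes x :: "nat \<Rightarrow> complex"
  assumes "\<forall>k<m. x k \<in> Z12" "(\<Sum>k<m. (cmod (x k))\<^sup>2) = 1"
  obtains i e where "i < m" "x i = zeta12 ^ e" "\<forall>k<m. k \<noteq> i \<longrightarrow> x k = 0"
proof -
  define P where "P k = norm_int_part (x k)" for k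
  have sum_P: "(\<Sum>k<m. P k) = 1"
    using sum_norm_parts_Z12(1)[of "{..<m}" x 1] assms unfolding P_def by simp
  have P_nonneg: "0 \<le> P k" if "k < m" for k
    using assms(1) that Z12_norm_int_part_nonneg unfolding P_def by blast
  have "\<exists>i<m. P i \<noteq> 0"
  proof (rule ccontr)
    assume "\<not> ?thesis"
    then have "(\<Sum>k<m. P k) = 0" by simp
    with sum_P show False by simp
  qed
  then obtain i where i: "i < m" "P i \<noteq> 0" by blast
  have split: "(\<Sum>k<m. P k) = P i + (\<Sum>k\<in>{..<m} - {i}. P k)"
    using i(1) by (simp add: sum.remove)
  have rest_nonneg: "0 \<le> (\<Sum>k\<in>{..<m} - {i}. P k)"
    using P_nonneg by (intro sum_nonneg) auto
  have "P i = 1" and rest: "(\<Sum>k\<in>{..<m} - {i}. P k) = 0"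
    using split rest_nonneg sum_P P_nonneg[OF i(1)] i(2) by linarith+
  have "x k = 0" if "k < m" "k \<noteq> i" for k
  proof -
    have "P k = 0" using rest sum_nonneg_eq_0_iff[of "{..<m} - {i}" P] P_nonneg that by auto
    then show ?thesis using Z12_norm_int_part_eq_0 assms(1) that unfolding P_def by blast
  qed
  moreover obtain e where "x i = zeta12 ^ e"
    using Z12_norm_int_part_eq_1 assms(1) i(1) \<open>P i = 1\<close> unfolding P_def by blast
  ultimately show ?thesis using that i(1) by blast
qed

section \<open>Gate sequences\<close>

definition gate_reachable :: "nat \<Rightarrow> complex vec \<Rightarrow> complex vec \<Rightarrow> bool" where
  "gate_reachable m u v \<longleftrightarrow> (\<exists>Gs. set Gs \<subseteq> gates m \<and> mat_prod_list m Gs *\<^sub>v u = v)"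

lemma gates_carrier: "G \<in> gates m \<Longrightarrow> G \<in> carrier_mat m m"
  unfolding gates_def one_level_def two_level_def by auto

lemma mat_prod_list_Cons: "mat_prod_list m (G # Gs) = G * mat_prod_list m Gs"
  unfolding mat_prod_list_def by simp

lemma mat_prod_list_carrier: "set Gs \<subseteq> gates m \<Longrightarrow> mat_prod_list m Gs \<in> carrier_mat m m"
  by (induction Gs) (auto simp: mat_prod_list_def dest: gates_carrier)

lemma mat_prod_list_append:
  assumes "set Gs \<subseteq> gates m" "set Hs \<subseteq> gates m"
  shows "mat_prod_list m (Gs @ Hs) = mat_prod_list m Gs * mat_prod_list m Hs"
  using assms(1)
proof (induction Gs)
  case Nil
  then show ?case using mat_prod_list_carrier[OF assms(2)] by (simp add: mat_prod_list_def)
next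
  case (Cons G Gs)
  then have "G \<in> carrier_mat m m" "mat_prod_list m Gs \<in> carrier_mat m m"
    using gates_carrier mat_prod_list_carrier by auto
  then show ?case
    using Cons mat_prod_list_carrier[OF assms(2)] by (simp add: mat_prod_list_Cons)
qed

lemma gate_reachable_refl: "u \<in> carrier_vec m \<Longrightarrow> gate_reachable m u u"
  unfolding gate_reachable_def by (intro exI[of _ "[]"]) (simp add: mat_prod_list_def)

lemma gate_reachable_gate:
  assumes "G \<in> gates m"
  shows "gate_reachable m u (G *\<^sub>v u)"
proof -
  have "mat_prod_list m [G] = G"
    using gates_carrier[OF assms] by (simp add: mat_prod_list_def)
  then show ?thesis unfolding gate_reachable_def using assms by (intro exI[of _ "[G]"]) simp
qed

lemma gate_reachable_trans:
  assumes "gate_reachable m u v" "gate_reachable m v w" "u \<in> carrier_vec m"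
  shows "gate_reachable m u w"
proof -
  obtain Gs where Gs: "set Gs \<subseteq> gates m" "mat_prod_list m Gs *\<^sub>v u = v"
    using assms(1) unfolding gate_reachable_def by blast
  obtain Hs where Hs: "set Hs \<subseteq> gates m" "mat_prod_list m Hs *\<^sub>v v = w"
    using assms(2) unfolding gate_reachable_def by blast
  have "mat_prod_list m (Hs @ Gs) *\<^sub>v u = mat_prod_list m Hs *\<^sub>v (mat_prod_list m Gs *\<^sub>v u)"
    unfolding mat_prod_list_append[OF Hs(1) Gs(1)]
    using mat_prod_list_carrier[OF Hs(1)] mat_prod_list_carrier[OF Gs(1)] assms(3)
    by (rule assoc_mult_mat_vec)
  then have "mat_prod_list m (Hs @ Gs) *\<^sub>v u = w" using Gs(2) Hs(2) by simp
  moreover have "set (Hs @ Gs) \<subseteq> gates m" using Gs Hs by simp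
  ultimately show ?thesis unfolding gate_reachable_def by blast
qed

lemma gate_reachable_smult:
  assumes "gate_reachable m u v" "u \<in> carrier_vec m"
  shows "gate_reachable m (c \<cdot>\<^sub>v u) (c \<cdot>\<^sub>v v)"
proof -
  obtain Gs where "set Gs \<subseteq> gates m" "mat_prod_list m Gs *\<^sub>v u = v"
    using assms(1) unfolding gate_reachable_def by blast
  moreover from this have "mat_prod_list m Gs *\<^sub>v (c \<cdot>\<^sub>v u) = c \<cdot>\<^sub>v v"
    using assms(2) mat_prod_list_carrier by (metis mult_mat_vec)
  ultimately show ?thesis unfolding gate_reachable_def by blast
qed

lemma sum_supported_on_pair:
  assumes "finite A" "a \<in> A" "b \<in> A" "a \<noteq> b" "\<And>k. k \<in> A \<Longrightarrow> k \<noteq> a \<Longrightarrow> k \<noteq> b \<Longrightarrow> f k = 0"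
  shows "sum f A = f a + f b"
proof -
  have "sum f A = sum f {a, b}" using assms by (intro sum.mono_neutral_right) auto
  then show ?thesis using assms(4) by simp
qed

lemma sum_supported_on_point:
  assumes "finite A" "a \<in> A" "\<And>k. k \<in> A \<Longrightarrow> k \<noteq> a \<Longrightarrow> f k = 0"
  shows "sum f A = f a"
proof -
  have "sum f A = sum f {a}" using assms by (intro sum.mono_neutral_right) auto
  then show ?thesis by simp
qed

lemma one_level_mult_vec:
  assumes "u \<in> carrier_vec m"
  shows "one_level m j c *\<^sub>v u = vec m (\<lambda>i. if i = j then c * u $ i else u $ i)"
proof (rule eq_vecI)
  fix i assume "i < dim_vec (vec m (\<lambda>i. if i = j then c * u $ i else u $ i))"
  then have i: "i < m" by simp
  have "(one_level m j c *\<^sub>v u) $ i = (\<Sum>k\<in>{0..<m}. one_level m j c $$ (i, k) * u $ k)"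
    using i assms unfolding one_level_def by (simp add: scalar_prod_def)
  also have "\<dots> = one_level m j c $$ (i, i) * u $ i"
    using i by (intro sum_supported_on_point) (auto simp: one_level_def)
  finally show "(one_level m j c *\<^sub>v u) $ i = vec m (\<lambda>i. if i = j then c * u $ i else u $ i) $ i"
    using i by (simp add: one_level_def)
qed (simp add: one_level_def)

lemma two_level_mult_vec:
  assumes "u \<in> carrier_vec m" "a < b" "b < m"
  shows "two_level m a b M *\<^sub>v u = vec m (\<lambda>i.
    if i = a then M $$ (0, 0) * u $ a + M $$ (0, 1) * u $ b
    else if i = b then M $$ (1, 0) * u $ a + M $$ (1, 1) * u $ b else u $ i)"
  (is "_ = vec m ?f")
proof (rule eq_vecI)
  fix i assume "i < dim_vec (vec m ?f)"
  then have i: "i < m" by simp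
  have "(two_level m a b M *\<^sub>v u) $ i = (\<Sum>k\<in>{0..<m}. two_level m a b M $$ (i, k) * u $ k)"
    using i assms unfolding two_level_def by (simp add: scalar_prod_def)
  also have "\<dots> = ?f i"
  proof (cases "i = a \<or> i = b")
    case True
    then show ?thesis
      using assms i by (subst sum_supported_on_pair[of _ a b]) (auto simp: two_level_def)
  next
    case False
    then show ?thesis
      using assms i by (subst sum_supported_on_point[of _ i]) (auto simp: two_level_def)
  qed
  finally show "(two_level m a b M *\<^sub>v u) $ i = vec m ?f $ i" using i by simp
qed (simp add: two_level_def)

lemma gate_reachable_zeta12_pow_entry:
  assumes "u \<in> carrier_vec m" "j < m"
  shows "gate_reachable m u (vec m (\<lambda>i. if i = j then zeta12 ^ e * u $ i else u $ i))"
proof (induction e)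
  case 0
  have "vec m (\<lambda>i. if i = j then zeta12 ^ 0 * u $ i else u $ i) = u"
    using assms(1) by (intro eq_vecI) auto
  then show ?case using gate_reachable_refl assms(1) by simp
next
  case (Suc e)
  let ?v = "vec m (\<lambda>i. if i = j then zeta12 ^ e * u $ i else u $ i)"
  have "one_level m j zeta12 \<in> gates m" unfolding gates_def using assms(2) by blast
  moreover have "one_level m j zeta12 *\<^sub>v ?v
      = vec m (\<lambda>i. if i = j then zeta12 ^ Suc e * u $ i else u $ i)"
    by (subst one_level_mult_vec[of _ m]) (auto intro: eq_vecI)
  ultimately show ?case using Suc gate_reachable_trans gate_reachable_gate assms(1) by metis
qed

lemma gate_reachable_Hprime:
  assumes "u \<in> carrier_vec m" "a < b" "b < m"
  shows "gate_reachable m u (vec m (\<lambda>i.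
    if i = a then (1 + \<i>) / 2 * (u $ a + u $ b)
    else if i = b then (1 + \<i>) / 2 * (u $ a - u $ b) else u $ i))"
proof -
  have gate: "two_level m a b Hprime \<in> gates m" unfolding gates_def using assms(2,3) by blast
  have H: "Hprime $$ (0, 0) = (1 + \<i>) / 2" "Hprime $$ (0, 1) = (1 + \<i>) / 2"
    "Hprime $$ (1, 0) = (1 + \<i>) / 2" "Hprime $$ (1, 1) = - (1 + \<i>) / 2"
    unfolding Hprime_def mat_of_rows_list_def by simp_all
  have "two_level m a b Hprime *\<^sub>v u = vec m (\<lambda>i.
    if i = a then (1 + \<i>) / 2 * (u $ a + u $ b)
    else if i = b then (1 + \<i>) / 2 * (u $ a - u $ b) else u $ i)"
    unfolding two_level_mult_vec[OF assms] H by (intro eq_vecI) (simp_all add: field_simps)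
  then show ?thesis using gate_reachable_gate[OF gate] by metis
qed

lemma gate_reachable_unit_vec:
  assumes "i < m" "j < m"
  shows "gate_reachable m (unit_vec m i) (unit_vec m j)"
proof (cases "i = j")
  case True
  then show ?thesis by (simp add: gate_reachable_refl)
next
  case False
  define a b where "a = min i j" and "b = max i j"
  have ab: "a < b" "b < m" unfolding a_def b_def using assms False by auto
  have gate: "two_level m a b Xmat \<in> gates m" unfolding gates_def using ab by blast
  have X: "Xmat $$ (0, 0) = 0" "Xmat $$ (0, 1) = 1" "Xmat $$ (1, 0) = 1" "Xmat $$ (1, 1) = 0"
    unfolding Xmat_def mat_of_rows_list_def by simp_all
  have "two_level m a b Xmat *\<^sub>v unit_vec m i = unit_vec m j"
    unfolding two_level_mult_vec[OF unit_vec_carrier ab] X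
    using assms False unfolding a_def b_def by (intro eq_vecI) (auto simp: unit_vec_def)
  then show ?thesis using gate_reachable_gate[OF gate] by metis
qed

section \<open>Clearing the factors \<open>1 + \<i>\<close>\<close>

definition sqnorm :: "nat \<Rightarrow> complex vec \<Rightarrow> real" where
  "sqnorm m u = (\<Sum>i<m. (cmod (u $ i))\<^sup>2)"

lemma sqnorm_smult: "u \<in> carrier_vec m \<Longrightarrow> sqnorm m (c \<cdot>\<^sub>v u) = (cmod c)\<^sup>2 * sqnorm m u"
  unfolding sqnorm_def by (simp add: sum_distrib_left norm_mult power_mult_distrib)

lemma sum_eq_if_pair_sums_eq:
  assumes "finite A" "a \<in> A" "b \<in> A" "a \<noteq> b"
    and "\<And>t. t \<in> A \<Longrightarrow> t \<noteq> a \<Longrightarrow> t \<noteq> b \<Longrightarrow> f t = g t" "f a + f b = g a + g b"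
  shows "sum f A = sum g A"
proof -
  have split: "sum h A = h a + h b + sum h (A - {a, b})" for h :: "'a \<Rightarrow> 'b"
    using assms(1-4)
    by (simp add: sum.remove[of A a] sum.remove[of "A - {a}" b] Diff_insert2 [symmetric] add.assoc)
  have "sum f (A - {a, b}) = sum g (A - {a, b})" using assms(5) by (intro sum.cong) auto
  then show ?thesis unfolding split[of f] split[of g] assms(6) by simp
qed

lemma cmod_sq_Hprime_pair:
  "(cmod ((1 + \<i>) / 2 * (p + r)))\<^sup>2 + (cmod ((1 + \<i>) / 2 * (p - r)))\<^sup>2 = (cmod p)\<^sup>2 + (cmod r)\<^sup>2"
proof -
  obtain p1 p2 r1 r2 where pr: "p = Complex p1 p2" "r = Complex r1 r2" by (meson complex.exhaust)
  have h: "(1 + \<i>) / 2 = Complex (1 / 2) (1 / 2)" by (simp add: complex_eq_iff)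
  show ?thesis unfolding pr h cmod_power2 by (simp add: power2_eq_square field_simps)
qed

lemma pair_step:
  assumes x: "x \<in> carrier_vec m" and ab: "a < b" "b < m"
    and xb: "x $ b \<in> Z12" and dvd2: "z12_dvd 2 (x $ a - zeta12 ^ e * x $ b)"
  obtains y where "gate_reachable m x y" "y \<in> carrier_vec m" "sqnorm m y = sqnorm m x"
    "z12_dvd (1 + \<i>) (y $ a)" "z12_dvd (1 + \<i>) (y $ b)" "\<forall>t<m. t \<noteq> a \<longrightarrow> t \<noteq> b \<longrightarrow> y $ t = x $ t"
proof -
  \<comment> \<open>after the \<open>\<zeta>\<^sup>e\<close>-gate the pair \<open>(p, r)\<close> satisfies \<open>p \<equiv> r\<close> mod 2, so \<open>H'\<close> yields
    \<open>(1 + \<i>) (w + r)\<close> and \<open>(1 + \<i>) w\<close> where \<open>p - r = 2 w\<close>\<close>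
  define p r where "p = x $ a" and "r = zeta12 ^ e * x $ b"
  define x1 where "x1 = vec m (\<lambda>i. if i = b then zeta12 ^ e * x $ i else x $ i)"
  define y where "y = vec m (\<lambda>i. if i = a then (1 + \<i>) / 2 * (p + r)
    else if i = b then (1 + \<i>) / 2 * (p - r) else x $ i)"
  have "gate_reachable m x x1"
    unfolding x1_def using x ab by (intro gate_reachable_zeta12_pow_entry) auto
  moreover have "gate_reachable m x1 y"
  proof -
    have "vec m (\<lambda>i. if i = a then (1 + \<i>) / 2 * (x1 $ a + x1 $ b)
        else if i = b then (1 + \<i>) / 2 * (x1 $ a - x1 $ b) else x1 $ i) = y"
      using ab by (intro eq_vecI) (auto simp: x1_def y_def p_def r_def)
    then show ?thesis using gate_reachable_Hprime[of x1 m a b] ab unfolding x1_def by simp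
  qed
  ultimately have "gate_reachable m x y" using gate_reachable_trans x by blast
  moreover have "sqnorm m y = sqnorm m x"
    unfolding sqnorm_def using ab cmod_sq_Hprime_pair[of p r]
    by (intro sum_eq_if_pair_sums_eq[of _ a b]) (auto simp: y_def p_def r_def norm_mult norm_power)
  moreover obtain w where w: "w \<in> Z12" "p - r = 2 * w"
    using dvd2 unfolding z12_dvd_def p_def r_def by blast
  have "r \<in> Z12" unfolding r_def using xb by (simp add: Z12_mult)
  have "p = r + 2 * w" using w(2) by (simp add: algebra_simps)
  then have "y $ a = (1 + \<i>) * (w + r)" "y $ b = (1 + \<i>) * w"
    using ab unfolding y_def by (simp_all add: field_simps)
  then have "z12_dvd (1 + \<i>) (y $ a)" "z12_dvd (1 + \<i>) (y $ b)"
    unfolding z12_dvd_def using w(1) \<open>r \<in> Z12\<close> Z12_add by blast+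
  moreover have "\<forall>t<m. t \<noteq> a \<longrightarrow> t \<noteq> b \<longrightarrow> y $ t = x $ t" unfolding y_def by simp
  ultimately show thesis using that y_def by simp
qed

definition nondivisible_entries :: "nat \<Rightarrow> complex vec \<Rightarrow> nat set" where
  "nondivisible_entries m v = {k. k < m \<and> \<not> z12_dvd (1 + \<i>) (v $ k)}"

lemma pairing_step:
  assumes x: "x \<in> carrier_vec m" "\<forall>k<m. x $ k \<in> Z12" "sqnorm m x = of_int n" "even n"
    and i: "i \<in> nondivisible_entries m x"
  obtains y where "gate_reachable m x y" "y \<in> carrier_vec m" "\<forall>k<m. y $ k \<in> Z12"
    "sqnorm m y = sqnorm m x" "nondivisible_entries m y \<subset> nondivisible_entries m x"
proof -
  obtain j r where j: "j < m" "j \<noteq> i" "zeta_class_mod2 r (x $ i)" "zeta_class_mod2 r (x $ j)"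
    using exists_zeta_class_partner[of m "\<lambda>k. x $ k" n i] x i
    unfolding sqnorm_def nondivisible_entries_def by auto
  define a b where "a = min i j" and "b = max i j"
  have ab: "a < b" "b < m" "i \<in> {a, b}"
    using i j(1,2) unfolding a_def b_def nondivisible_entries_def by auto
  have "zeta_class_mod2 r (x $ a)" "zeta_class_mod2 r (x $ b)"
    using j(3,4) unfolding a_def b_def by (simp_all add: min_def max_def)
  then obtain e where "z12_dvd 2 (x $ a - zeta12 ^ e * x $ b)" using zeta_class_mod2_rotate by blast
  moreover have "x $ b \<in> Z12" using x(2) ab(2) by blast
  ultimately obtain y where y: "gate_reachable m x y" "y \<in> carrier_vec m" "sqnorm m y = sqnorm m x"
    "z12_dvd (1 + \<i>) (y $ a)" "z12_dvd (1 + \<i>) (y $ b)" "\<forall>t<m. t \<noteq> a \<longrightarrow> t \<noteq> b \<longrightarrow> y $ t = x $ t"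
    using pair_step x(1) ab(1,2) by metis
  have "\<forall>k<m. y $ k \<in> Z12" using x(2) y(4-6) z12_dvd_imp_Z12[OF Z12_1_plus_i] by metis
  moreover have "nondivisible_entries m y \<subseteq> nondivisible_entries m x - {i}"
    using y(4-6) ab(3) unfolding nondivisible_entries_def by auto
  then have "nondivisible_entries m y \<subset> nondivisible_entries m x" using i by blast
  ultimately show thesis using that y(1-3) by blast
qed

lemma gate_reachable_all_entries_dvd:
  assumes "x \<in> carrier_vec m" "\<forall>k<m. x $ k \<in> Z12" "sqnorm m x = of_int n" "even n"
  shows "\<exists>y. gate_reachable m x y \<and> y \<in> carrier_vec m \<and> sqnorm m y = sqnorm m x
    \<and> (\<forall>k<m. z12_dvd (1 + \<i>) (y $ k))"
  using assms(1-3)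
proof (induction "card (nondivisible_entries m x)" arbitrary: x rule: less_induct)
  case less
  show ?case
  proof (cases "nondivisible_entries m x = {}")
    case True
    then show ?thesis
      using less.prems(1) gate_reachable_refl unfolding nondivisible_entries_def by blast
  next
    case False
    then obtain i where "i \<in> nondivisible_entries m x" by blast
    then obtain y where y: "gate_reachable m x y" "y \<in> carrier_vec m" "\<forall>k<m. y $ k \<in> Z12"
      "sqnorm m y = sqnorm m x" "nondivisible_entries m y \<subset> nondivisible_entries m x"
      using pairing_step less.prems assms(4) by metis
    have "finite (nondivisible_entries m x)" unfolding nondivisible_entries_def by simp
    then have "card (nondivisible_entries m y) < card (nondivisible_entries m x)"
      using y(5) by (rule psubset_card_mono)
    moreover have "sqnorm m y = of_int n" using y(4) less.prems(3) by simp
    ultimately obtain z where "gate_reachable m y z" "z \<in> carrier_vec m" "sqnorm m z = sqnorm m y"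
      "\<forall>k<m. z12_dvd (1 + \<i>) (z $ k)"
      using less.hyps y(2,3) by blast
    then show ?thesis using y(1,4) gate_reachable_trans less.prems(1) by metis
  qed
qed

lemma vec_entries_dvd_obtain:
  assumes "y \<in> carrier_vec m" "\<forall>k<m. z12_dvd d (y $ k)" "d \<noteq> 0"
  obtains y' where "y = d \<cdot>\<^sub>v y'" "y' \<in> carrier_vec m" "\<forall>k<m. y' $ k \<in> Z12"
proof
  define y' where "y' = vec m (\<lambda>k. y $ k / d)"
  show "y = d \<cdot>\<^sub>v y'" using assms(1,3) unfolding y'_def by (intro eq_vecI) auto
  show "y' \<in> carrier_vec m" unfolding y'_def by simp
  show "\<forall>k<m. y' $ k \<in> Z12" using assms(2,3) unfolding y'_def z12_dvd_def by auto
qed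

lemma gate_reachable_unit_vec_of_sqnorm_1:
  assumes "x \<in> carrier_vec m" "\<forall>k<m. x $ k \<in> Z12" "sqnorm m x = 1" "j < m"
  shows "gate_reachable m x (unit_vec m j)"
proof -
  have "(\<Sum>k<m. (cmod (x $ k))\<^sup>2) = 1" using assms(3) unfolding sqnorm_def .
  with assms(2) obtain i e where i: "i < m" "x $ i = zeta12 ^ e" "\<forall>k<m. k \<noteq> i \<longrightarrow> x $ k = 0"
    by (rule Z12_unit_sqnorm_support)
  have "vec m (\<lambda>k. if k = i then zeta12 ^ (11 * e) * x $ k else x $ k) = unit_vec m i"
    using i zeta12_pow_inverse[of e] by (intro eq_vecI) (auto simp: unit_vec_def)
  then have "gate_reachable m x (unit_vec m i)"
    using gate_reachable_zeta12_pow_entry[OF assms(1) i(1), of "11 * e"] by simp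
  then show ?thesis
    using gate_reachable_trans gate_reachable_unit_vec[OF i(1) assms(4)] assms(1) by blast
qed

lemma cmod_1_plus_i_sq: "(cmod (1 + \<i>))\<^sup>2 = 2"
  by (simp add: cmod_power2)

lemma gate_reachable_scaled_unit_vec:
  assumes "x \<in> carrier_vec m" "\<forall>k<m. x $ k \<in> Z12" "sqnorm m x = 2 ^ l" "j < m"
  shows "gate_reachable m x ((1 + \<i>) ^ l \<cdot>\<^sub>v unit_vec m j)"
  using assms(1-3)
proof (induction l arbitrary: x)
  case 0
  then show ?case using gate_reachable_unit_vec_of_sqnorm_1 assms(4) by simp
next
  case (Suc l)
  obtain y where y: "gate_reachable m x y" "y \<in> carrier_vec m" "sqnorm m y = 2 ^ Suc l"
    "\<forall>k<m. z12_dvd (1 + \<i>) (y $ k)"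
    using gate_reachable_all_entries_dvd[of x m "2 ^ Suc l"] Suc.prems by auto
  obtain y' where y': "y = (1 + \<i>) \<cdot>\<^sub>v y'" "y' \<in> carrier_vec m" "\<forall>k<m. y' $ k \<in> Z12"
    using vec_entries_dvd_obtain[OF y(2) y(4)] by (auto simp: complex_eq_iff)
  have "sqnorm m y' = 2 ^ l" using y(3) sqnorm_smult[OF y'(2)] cmod_1_plus_i_sq y'(1) by simp
  then have "gate_reachable m y' ((1 + \<i>) ^ l \<cdot>\<^sub>v unit_vec m j)" using Suc.IH y'(2,3) by blast
  then have "gate_reachable m ((1 + \<i>) \<cdot>\<^sub>v y') ((1 + \<i>) \<cdot>\<^sub>v ((1 + \<i>) ^ l \<cdot>\<^sub>v unit_vec m j))"
    using y'(2) by (rule gate_reachable_smult)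
  then have "gate_reachable m y ((1 + \<i>) ^ Suc l \<cdot>\<^sub>v unit_vec m j)"
    using y'(1) by (simp add: smult_smult_assoc)
  then show ?case using gate_reachable_trans y(1) Suc.prems(1) by blast
qed

lemma gate_reachable_smult_cancel:
  assumes "gate_reachable m (c \<cdot>\<^sub>v u) (c \<cdot>\<^sub>v v)" "u \<in> carrier_vec m" "c \<noteq> 0"
  shows "gate_reachable m u v"
proof -
  have "gate_reachable m (inverse c \<cdot>\<^sub>v (c \<cdot>\<^sub>v u)) (inverse c \<cdot>\<^sub>v (c \<cdot>\<^sub>v v))"
    using assms(1) by (rule gate_reachable_smult) (simp add: assms(2))
  then show ?thesis using assms(3) by (simp add: smult_smult_assoc)
qed

theorem lemma7p5:
  fixes m j :: nat and u :: "complex vec"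
  assumes "u \<in> carrier_vec m"
    and "\<forall>i<m. u $ i \<in> R12"
    and "(\<Sum>i<m. (cmod (u $ i))\<^sup>2) = 1"
    and "j < m"
  shows "\<exists>Gs. set Gs \<subseteq> gates m \<and> mat_prod_list m Gs *\<^sub>v u = unit_vec m j"
proof -
  obtain K where K: "\<forall>i<m. 2 ^ K * u $ i \<in> Z12"
    using R12_common_pow2_mult_Z12[of m "\<lambda>i. u $ i"] assms(2) by blast
  define c where "c = (1 + \<i>) ^ (2 * K)"
  have c: "c = \<i> ^ K * 2 ^ K"
    unfolding c_def power_mult by (simp add: power2_eq_square algebra_simps power_mult_distrib)
  have "\<forall>i<m. (c \<cdot>\<^sub>v u) $ i \<in> Z12"
    using K assms(1) unfolding c by (simp add: Z12_mult Z12_power mult.assoc)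
  moreover have "sqnorm m (c \<cdot>\<^sub>v u) = 2 ^ (2 * K)"
    using assms(3) unfolding sqnorm_smult[OF assms(1)] c
    by (simp add: sqnorm_def norm_mult norm_power mult.commute flip: power_mult)
  ultimately have "gate_reachable m (c \<cdot>\<^sub>v u) (c \<cdot>\<^sub>v unit_vec m j)"
    using gate_reachable_scaled_unit_vec[of "c \<cdot>\<^sub>v u" m "2 * K" j] assms(1,4)
    unfolding c_def by simp
  then have "gate_reachable m u (unit_vec m j)"
    using gate_reachable_smult_cancel assms(1) c by fastforce
  then show ?thesis unfolding gate_reachable_def .
qed

end
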